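(* Let $\mathcal{A}$ be a u-MPS core tensor over a finite alphabet $\Sigma$ with bond dimension $D$, and let $R$ be an arbitrary (possibly ambiguous) regular expression over $\Sigma$. Then the generalized right transfer operator $\mathcal{E}^{r}_R$ converges if and only if the generalized left transfer operator $\mathcal{E}^{\ell}_R$ converges, and in this case, for all $Q_r, Q_\ell \in \mathbb{R}^{D\times D}$, $$\mathcal{E}^{r}_R(Q_r) = \sum_{s\in\Sigma^*} |s|_R\, \mathcal{A}(s)\, Q_r\, \mathcal{A}(s)^T, \qquad \mathcal{E}^{\ell}_R(Q_\ell) = \sum_{s\in\Sigma^*} |s|_R\, \mathcal{A}(s)^T Q_\ell\, \mathcal{A}(s).$$ In particular, if $R$ is unambiguous (i.e. $|s|_R\in\{0,1\}$ for all $s$), then $\mathcal{E}^{r}_R(Q_r) = \sum_{s\in \mathcal{L}(R)} \mathcal{A}(s) Q_r \mathcal{A}(s)^T$ and $\mathcal{E}^{\ell}_R(Q_\ell) = \sum_{s\in \mathcal{L}(R)} \mathcal{A}(s)^T Q_\ell \mathcal{A}(s)$, where $\mathcal{L}(R)$ is the set of strings matching $R$.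
   Context: A u-MPS (uniform matrix product state) over a finite alphabet $\Sigma$ of size $d$ consists of a core tensor $\mathcal{A}$ of shape $(D,d,D)$, which assigns to each character $c\in\Sigma$ a matrix $\mathcal{A}(c)\in\mathbb{R}^{D\times D}$, together with boundary vectors $\alpha,\omega\in\mathbb{R}^D$. For a string $s=s_1\cdots s_n\in\Sigma^*$, $\mathcal{A}(s):=\mathcal{A}(s_1)\cdots\mathcal{A}(s_n)$, with $\mathcal{A}(\varepsilon)=I$ for the empty string $\varepsilon$. Regular expressions (regex) are syntax trees built from: single characters $c\in\Sigma$; concatenations $R_1R_2$; unions $R_1|R_2$; Kleene closures $S^*$. The match count $|s|_R\in\mathbb{N}\cup\{\infty\}$ of a string $s$ against $R$ is defined recursively: $|s|_c=1$ if $s=c$ and $0$ otherwise; $|s|_{R_1R_2}=\sum_{s_1s_2=s}|s_1|_{R_1}|s_2|_{R_2}$ (sum over all splittings of $s$ into prefix and suffix); $|s|_{R_1|R_2}=|s|_{R_1}+|s|_{R_2}$; $|s|_{S^*}=\sum_{n\ge0}\sum_{s_1\cdots s_n=s}|s_1|_S\cdots|s_n|_S$ (sum over all splittings into $n$ contiguous pieces; the $n=0$ term is $1$ if $s=\varepsilon$ and $0$ otherwise). $R$ is unambiguous if $|s|_R\in\{0,1\}$ for all $s$. Generalized transfer operators are linear maps on $D\times D$ matrices defined recursively: $\mathcal{E}^r_c(Q)=\mathcal{A}(c)Q\mathcal{A}(c)^T$, $\mathcal{E}^\ell_c(Q)=\mathcal{A}(c)^TQ\mathcal{A}(c)$; $\mathcal{E}^r_{R_1R_2}=\mathcal{E}^r_{R_1}\circ\mathcal{E}^r_{R_2}$,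 $\mathcal{E}^\ell_{R_1R_2}=\mathcal{E}^\ell_{R_2}\circ\mathcal{E}^\ell_{R_1}$; $\mathcal{E}^{r}_{R_1|R_2}=\mathcal{E}^{r}_{R_1}+\mathcal{E}^{r}_{R_2}$, $\mathcal{E}^{\ell}_{R_1|R_2}=\mathcal{E}^{\ell}_{R_1}+\mathcal{E}^{\ell}_{R_2}$; $\mathcal{E}^r_{S^*}(Q)=\sum_{n=0}^\infty(\mathcal{E}^r_S)^{\circ n}(Q)$, $\mathcal{E}^\ell_{S^*}(Q)=\sum_{n=0}^\infty(\mathcal{E}^\ell_S)^{\circ n}(Q)$, where $(\cdot)^{\circ 0}$ is the identity map. $\mathcal{E}^r_R$ (resp. $\mathcal{E}^\ell_R$) is said to converge if every infinite series arising from Kleene closures in this recursive definition converges (equivalently, for every subexpression $S^*$ of $R$, the spectral radius of the corresponding operator $\mathcal{E}^r_S$, resp. $\mathcal{E}^\ell_S$, is $<1$). *)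

theory Defs
  imports "HOL-Analysis.Analysis" "HOL-Library.Extended_Nat"
begin

datatype 'c regex = Atom 'c | Conc "'c regex" "'c regex" | Alt "'c regex" "'c regex"
  | Star "'c regex"

text \<open>Match count |s|_R in N \<union> {\<infinity>} (enat, with 0 * \<infinity> = 0). The infinite sum over the number
  of pieces in the Kleene closure is the supremum of its partial sums.\<close>
primrec match_count :: "'c regex \<Rightarrow> 'c list \<Rightarrow> enat" where
  "match_count (Atom c) s = (if s = [c] then 1 else 0)"
| "match_count (Conc R1 R2) s =
     (\<Sum>i\<in>{0..length s}. match_count R1 (take i s) * match_count R2 (drop i s))"
| "match_count (Alt R1 R2) s = match_count R1 s + match_count R2 s"
| "match_count (Star S) s =
     (SUP N. \<Sum>n<N. \<Sum>ps\<in>{ps. length ps = n \<and> concat ps = s}.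
                 prod_list (map (match_count S) ps))"

definition unambiguous :: "'c regex \<Rightarrow> bool" where
  "unambiguous R \<longleftrightarrow> (\<forall>s. match_count R s \<in> {0, 1})"

definition lang :: "'c regex \<Rightarrow> 'c list set" where
  "lang R = {s. match_count R s \<noteq> 0}"

definition word_mat :: "('c \<Rightarrow> real^'n^'n) \<Rightarrow> 'c list \<Rightarrow> real^'n^'n" where
  "word_mat A s = foldr (\<lambda>c M. A c ** M) s (mat 1)"

primrec E_r :: "('c \<Rightarrow> real^'n^'n) \<Rightarrow> 'c regex \<Rightarrow> real^'n^'n \<Rightarrow> real^'n^'n" where
  "E_r A (Atom c) = (\<lambda>Q. A c ** Q ** transpose (A c))"
| "E_r A (Conc R1 R2) = E_r A R1 \<circ> E_r A R2"
| "E_r A (Alt R1 R2) = (\<lambda>Q. E_r A R1 Q + E_r A R2 Q)"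
| "E_r A (Star S) = (\<lambda>Q. \<Sum>n. (E_r A S ^^ n) Q)"

primrec E_l :: "('c \<Rightarrow> real^'n^'n) \<Rightarrow> 'c regex \<Rightarrow> real^'n^'n \<Rightarrow> real^'n^'n" where
  "E_l A (Atom c) = (\<lambda>Q. transpose (A c) ** Q ** A c)"
| "E_l A (Conc R1 R2) = E_l A R2 \<circ> E_l A R1"
| "E_l A (Alt R1 R2) = (\<lambda>Q. E_l A R1 Q + E_l A R2 Q)"
| "E_l A (Star S) = (\<lambda>Q. \<Sum>n. (E_l A S ^^ n) Q)"

primrec conv_r :: "('c \<Rightarrow> real^'n^'n) \<Rightarrow> 'c regex \<Rightarrow> bool" where
  "conv_r A (Atom c) = True"
| "conv_r A (Conc R1 R2) = (conv_r A R1 \<and> conv_r A R2)"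
| "conv_r A (Alt R1 R2) = (conv_r A R1 \<and> conv_r A R2)"
| "conv_r A (Star S) = (conv_r A S \<and> (\<forall>Q. summable (\<lambda>n. (E_r A S ^^ n) Q)))"

primrec conv_l :: "('c \<Rightarrow> real^'n^'n) \<Rightarrow> 'c regex \<Rightarrow> bool" where
  "conv_l A (Atom c) = True"
| "conv_l A (Conc R1 R2) = (conv_l A R1 \<and> conv_l A R2)"
| "conv_l A (Alt R1 R2) = (conv_l A R1 \<and> conv_l A R2)"
| "conv_l A (Star S) = (conv_l A S \<and> (\<forall>Q. summable (\<lambda>n. (E_l A S ^^ n) Q)))"

end

theory Submission
  imports Defs
begin

text \<open>Weight every word \<open>s\<close> by its match count \<open>|s|\<^sub>R\<close>.  By induction on \<open>R\<close>, the transfer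
  operator is the weighted series of the sandwiches \<open>A(s) Q A(s)\<^sup>T\<close>: union adds the weights and
  concatenation convolves them.  The double series behind a convolution converge absolutely because
  \<open>\<parallel>A(s) Q A(s)\<^sup>T\<parallel> \<le> \<parallel>A(s)\<parallel>\<^sup>2 \<parallel>Q\<parallel>\<close> and the scalar series \<open>\<Sum>\<^sub>s |s|\<^sub>R \<parallel>A(s)\<parallel>\<^sup>2\<close> is carried along
  the induction; the same bound holds for \<open>A(s)\<^sup>T Q A(s)\<close>.

  For a closure \<open>S\<^sup>*\<close>, the weight of \<open>(\<E>\<^sub>S)\<^sup>n\<close> is the \<open>n\<close>-th convolution power of \<open>|\<cdot>|\<^sub>S\<close>, and
  \<open>\<Sum>\<^sub>n (\<E>\<^sub>S)\<^sup>n Q\<close> converges for all \<open>Q\<close> iff the scalar double series of convolution powers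
  against \<open>\<parallel>A(s)\<parallel>\<^sup>2\<close> does: one direction is the norm bound, the other applies the trace to
  \<open>Q = I\<close>, using \<open>tr (A(s) A(s)\<^sup>T) = tr (A(s)\<^sup>T A(s)) = \<parallel>A(s)\<parallel>\<^sup>2\<close>.  The criterion is the same for
  right and left operators, hence the two notions of convergence agree.  Summability also forces
  \<open>|\<epsilon>|\<^sub>S = 0\<close>, a natural number whose powers must tend to \<open>0\<close>; so only \<open>n \<le> |s|\<close> pieces
  contribute to \<open>|s|\<^sub>S\<^sub>*\<close>, which keeps all match counts finite.\<close>

section \<open>Convolution of word weights\<close>

definition word_conv :: "('c list \<Rightarrow> real) \<Rightarrow> ('c list \<Rightarrow> real) \<Rightarrow> 'c list \<Rightarrow> real" where
  "word_conv a b s = (\<Sum>i\<in>{0..length s}. a (take i s) * b (drop i s))"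

fun word_conv_pow :: "('c list \<Rightarrow> real) \<Rightarrow> nat \<Rightarrow> 'c list \<Rightarrow> real" where
  "word_conv_pow c 0 s = (if s = [] then 1 else 0)"
| "word_conv_pow c (Suc n) s = word_conv c (word_conv_pow c n) s"

text \<open>Truncated at \<open>n \<le> length s\<close>: this is the full closure series only when \<open>c [] = 0\<close>
  (\<open>word_conv_pow_eq_0\<close>).\<close>

definition word_conv_star :: "('c list \<Rightarrow> real) \<Rightarrow> 'c list \<Rightarrow> real" where
  "word_conv_star c s = (\<Sum>n\<le>length s. word_conv_pow c n s)"

lemma word_conv_pow_Suc_eq: "word_conv_pow c (Suc n) = word_conv c (word_conv_pow c n)"
  by (rule ext) simp

lemma word_conv_nonneg: "(\<And>s. 0 \<le> a s) \<Longrightarrow> (\<And>s. 0 \<le> b s) \<Longrightarrow> 0 \<le> word_conv a b s"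
  by (auto simp: word_conv_def intro!: sum_nonneg)

lemma word_conv_pow_nonneg: "(\<And>s. 0 \<le> c s) \<Longrightarrow> 0 \<le> word_conv_pow c n s"
  by (induction n arbitrary: s) (auto intro: word_conv_nonneg)

lemma word_conv_pow_Nil: "word_conv_pow c n [] = c [] ^ n"
  by (induction n) (auto simp: word_conv_def)

lemma word_conv_pow_eq_0:
  assumes "c [] = 0"
  shows "length s < n \<Longrightarrow> word_conv_pow c n s = 0"
proof (induction n arbitrary: s)
  case (Suc n)
  have "c (take i s) * word_conv_pow c n (drop i s) = 0" if "i \<le> length s" for i
    using Suc that by (cases "i = 0") (auto simp: assms)
  then show ?case by (auto simp: word_conv_def intro!: sum.neutral)
qed simp

lemma has_sum_splits:
  fixes g :: "'c list \<Rightarrow> 'c list \<Rightarrow> 'a::real_normed_vector"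
  assumes "((\<lambda>(s, t). g s t) has_sum X) UNIV"
  shows "((\<lambda>u. \<Sum>i\<in>{0..length u}. g (take i u) (drop i u)) has_sum X) UNIV"
proof -
  have "bij_betw (\<lambda>(u, i). (take i u, drop i u)) (SIGMA u:UNIV. {0..length u}) UNIV"
    by (rule bij_betw_byWitness[where f'="\<lambda>(s, t). (s @ t, length s)"]) auto
  from has_sum_reindex_bij_betw[OF this, of "\<lambda>(s, t). g s t"] assms
  have "((\<lambda>(u, i). g (take i u) (drop i u)) has_sum X) (SIGMA u:UNIV. {0..length u})"
    by (simp add: case_prod_unfold)
  then show ?thesis
    by (rule has_sum_SigmaD) auto
qed

lemma has_sum_by_length:
  fixes h :: "nat \<Rightarrow> 'c list \<Rightarrow> 'a::real_normed_vector"
  assumes "((\<lambda>(n, s). h n s) has_sum X) UNIV" and "\<And>n s. length s < n \<Longrightarrow> h n s = 0"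
  shows "((\<lambda>s. \<Sum>n\<le>length s. h n s) has_sum X) UNIV"
proof -
  have swapped: "((\<lambda>(s, n). h n s) has_sum X) (UNIV \<times> UNIV)"
    using assms(1) has_sum_swap[where f="\<lambda>(n, s). h n s" and A=UNIV and B=UNIV]
    by (simp add: case_prod_unfold)
  have "((\<lambda>n. h n s) has_sum (\<Sum>n\<le>length s. h n s)) UNIV" for s
    by (rule has_sum_finite_neutralI[where B="{..length s}"]) (auto intro: assms(2))
  then show ?thesis
    using has_sum_SigmaD[OF swapped, of "\<lambda>s. \<Sum>n\<le>length s. h n s"] by simp
qed

lemma summable_on_product_nonneg:
  fixes g h :: "'a \<Rightarrow> real"
  assumes "\<And>x. 0 \<le> g x" "\<And>y. 0 \<le> h y" "g summable_on UNIV" "h summable_on UNIV"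
  shows "(\<lambda>(x, y). g x * h y) summable_on UNIV"
proof -
  have "(\<lambda>(x, y). g x * h y) summable_on UNIV \<times> UNIV"
  proof (rule summable_on_SigmaI[where g="\<lambda>x. g x * infsum h UNIV"])
    show "((\<lambda>y. case (x, y) of (x, y) \<Rightarrow> g x * h y) has_sum g x * infsum h UNIV) UNIV" for x
      using has_sum_cmult_right[OF has_sum_infsum[OF assms(4)], of "g x"] by simp
  qed (use assms in \<open>auto intro: summable_on_cmult_left\<close>)
  then show ?thesis by simp
qed

section \<open>Weighted series of word-indexed operators\<close>

definition weighted_summable :: "('c list \<Rightarrow> real) \<Rightarrow> ('c list \<Rightarrow> real) \<Rightarrow> bool" where
  "weighted_summable f c \<longleftrightarrow> (\<forall>s. 0 \<le> c s) \<and> (\<lambda>s. c s * f s) summable_on UNIV"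

definition has_weighted_sum ::
    "('c list \<Rightarrow> 'm \<Rightarrow> 'm::real_normed_vector) \<Rightarrow> ('c list \<Rightarrow> real) \<Rightarrow> ('m \<Rightarrow> 'm) \<Rightarrow> bool" where
  "has_weighted_sum T c F \<longleftrightarrow> (\<forall>Q. ((\<lambda>s. c s *\<^sub>R T s Q) has_sum F Q) UNIV)"

definition star_summable :: "('c list \<Rightarrow> real) \<Rightarrow> ('c list \<Rightarrow> real) \<Rightarrow> bool" where
  "star_summable f c \<longleftrightarrow> (\<lambda>(n, s). word_conv_pow c n s * f s) summable_on UNIV"

locale submultiplicative =
  fixes f :: "'c list \<Rightarrow> real"
  assumes nonneg: "0 \<le> f s"
    and append_le: "f (s @ t) \<le> f s * f t"
    and Nil_pos: "0 < f []"
begin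

lemma weighted_summable_single: "weighted_summable f (\<lambda>s. if s = w then 1 else 0)"
proof -
  have "((\<lambda>s. (if s = w then 1 else 0) * f s) has_sum f w) UNIV"
    by (rule has_sum_finite_neutralI[where B="{w}"]) auto
  then show ?thesis by (auto simp: weighted_summable_def summable_on_def)
qed

lemma weighted_summable_add:
  "weighted_summable f a \<Longrightarrow> weighted_summable f b \<Longrightarrow> weighted_summable f (\<lambda>s. a s + b s)"
  by (auto simp: weighted_summable_def distrib_right intro: summable_on_add)

lemma weighted_summable_conv:
  assumes "weighted_summable f a" "weighted_summable f b"
  shows "weighted_summable f (word_conv a b)"
proof -
  have a0: "0 \<le> a s" and b0: "0 \<le> b s" for s
    using assms by (auto simp: weighted_summable_def)
  have "(\<lambda>(s, t). (a s * f s) * (b t * f t)) summable_on UNIV"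
    using assms by (intro summable_on_product_nonneg) (auto simp: weighted_summable_def a0 b0 nonneg)
  then have splits: "(\<lambda>u. \<Sum>i\<in>{0..length u}.
      (a (take i u) * f (take i u)) * (b (drop i u) * f (drop i u))) summable_on UNIV"
    using has_sum_splits[where g="\<lambda>s t. (a s * f s) * (b t * f t)"] by (auto simp: summable_on_def)
  have "(\<lambda>u. word_conv a b u * f u) summable_on UNIV"
  proof (rule summable_on_comparison_test[OF splits])
    fix u :: "'c list"
    show "0 \<le> word_conv a b u * f u"
      by (simp add: word_conv_nonneg a0 b0 nonneg)
    have "word_conv a b u * f u = (\<Sum>i\<in>{0..length u}. a (take i u) * b (drop i u) * f (take i u @ drop i u))"
      by (simp add: word_conv_def sum_distrib_right)
    also have "\<dots> \<le> (\<Sum>i\<in>{0..length u}. (a (take i u) * f (take i u)) * (b (drop i u) * f (drop i u)))"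
    proof (rule sum_mono)
      fix i
      show "a (take i u) * b (drop i u) * f (take i u @ drop i u)
          \<le> (a (take i u) * f (take i u)) * (b (drop i u) * f (drop i u))"
        using mult_left_mono[OF append_le, of "a (take i u) * b (drop i u)" "take i u" "drop i u"]
        by (simp add: a0 b0 mult_ac)
    qed
    finally show "word_conv a b u * f u \<le> \<dots>" .
  qed
  then show ?thesis
    by (simp add: weighted_summable_def word_conv_nonneg a0 b0)
qed

lemma weighted_summable_conv_pow:
  assumes "weighted_summable f c"
  shows "weighted_summable f (word_conv_pow c n)"
proof (induction n)
  case 0
  show ?case
    using weighted_summable_single[of "[]"] by (simp add: if_distrib[symmetric] cong: if_cong)
next
  case (Suc n)
  then show ?case
    unfolding word_conv_pow_Suc_eq by (rule weighted_summable_conv[OF assms])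
qed

lemma weighted_summable_conv_star:
  assumes "weighted_summable f c" "star_summable f c" "c [] = 0"
  shows "weighted_summable f (word_conv_star c)"
proof -
  have c0: "0 \<le> c s" for s
    using assms(1) by (simp add: weighted_summable_def)
  obtain X where "((\<lambda>(n, s). word_conv_pow c n s * f s) has_sum X) UNIV"
    using assms(2) by (auto simp: star_summable_def summable_on_def)
  then have "((\<lambda>s. \<Sum>n\<le>length s. word_conv_pow c n s * f s) has_sum X) UNIV"
    by (rule has_sum_by_length) (simp add: word_conv_pow_eq_0 assms(3))
  then show ?thesis
    by (auto simp: weighted_summable_def summable_on_def word_conv_star_def sum_distrib_right
        word_conv_pow_nonneg c0 intro!: sum_nonneg)
qed

lemma star_summable_Nil_lt_1:
  assumes "star_summable f c"
  shows "\<bar>c []\<bar> < 1"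
proof -
  have "(\<lambda>(s, n). word_conv_pow c n s * f s) summable_on UNIV \<times> UNIV"
    using assms has_sum_swap[where f="\<lambda>(n, s). word_conv_pow c n s * f s" and A=UNIV and B=UNIV]
    by (auto simp: star_summable_def summable_on_def case_prod_unfold)
  then have "(\<lambda>n. c [] ^ n * f []) summable_on UNIV"
    using summable_on_SigmaD1[where f="\<lambda>s n. word_conv_pow c n s * f s" and x="[]"
        and A=UNIV and B="\<lambda>_. UNIV"]
    by (simp add: word_conv_pow_Nil)
  then have "(\<lambda>n. c [] ^ n) summable_on UNIV"
    using summable_on_cmult_left'[of "f []" "\<lambda>n. c [] ^ n" UNIV] Nil_pos by simp
  then have "summable (\<lambda>n. c [] ^ n)"
    by (rule summable_on_imp_summable)
  then show ?thesis by simp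
qed

end

text \<open>Right transfer operators form a homomorphism of the word monoid, left ones an
  anti-homomorphism.  The functional \<open>\<phi>\<close> recovers the bound \<open>f\<close>; for matrices it is the trace,
  with \<open>Q\<^sub>0\<close> the identity.\<close>

locale word_operators = submultiplicative f
  for f :: "'c list \<Rightarrow> real" +
  fixes T :: "'c list \<Rightarrow> 'm::banach \<Rightarrow> 'm" and \<phi> :: "'m \<Rightarrow> real" and Q\<^sub>0 :: 'm
  assumes bounded_linear_T: "bounded_linear (T s)"
    and T_Nil: "T [] Q = Q"
    and T_append: "(\<forall>s t. T (s @ t) = T s \<circ> T t) \<or> (\<forall>s t. T (s @ t) = T t \<circ> T s)"
    and norm_T_le: "norm (T s Q) \<le> f s * norm Q"
    and bounded_linear_\<phi>: "bounded_linear \<phi>"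
    and \<phi>_T: "\<phi> (T s Q\<^sub>0) = f s"
begin

lemma T_scaleR: "T s (r *\<^sub>R Q) = r *\<^sub>R T s Q"
  using bounded_linear_T by (rule linear.scaleR[OF bounded_linear.linear])

lemma has_weighted_sum_single: "has_weighted_sum T (\<lambda>s. if s = w then 1 else 0) (T w)"
  unfolding has_weighted_sum_def
proof
  show "((\<lambda>s. (if s = w then 1 else 0) *\<^sub>R T s Q) has_sum T w Q) UNIV" for Q
    by (rule has_sum_finite_neutralI[where B="{w}"]) auto
qed

lemma has_weighted_sum_add:
  "has_weighted_sum T a Fa \<Longrightarrow> has_weighted_sum T b Fb
    \<Longrightarrow> has_weighted_sum T (\<lambda>s. a s + b s) (\<lambda>Q. Fa Q + Fb Q)"
  by (auto simp: has_weighted_sum_def scaleR_add_left intro: has_sum_add)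

lemma summable_on_norm_weighted_T:
  assumes "\<And>x. x \<in> A \<Longrightarrow> 0 \<le> w x" and "(\<lambda>x. w x * f (\<sigma> x)) summable_on A"
  shows "(\<lambda>x. norm (w x *\<^sub>R T (\<sigma> x) Q)) summable_on A"
proof (rule summable_on_comparison_test)
  show "(\<lambda>x. w x * f (\<sigma> x) * norm Q) summable_on A"
    using assms(2) by (rule summable_on_cmult_left)
  show "norm (w x *\<^sub>R T (\<sigma> x) Q) \<le> w x * f (\<sigma> x) * norm Q" if "x \<in> A" for x
    using mult_left_mono[OF norm_T_le assms(1)[OF that]] assms(1)[OF that] by (simp add: mult.assoc)
qed simp

lemma norm_weighted_sum_le:
  assumes "\<And>s. 0 \<le> w s" "((\<lambda>s. w s *\<^sub>R T s Q) has_sum X) UNIV" "((\<lambda>s. w s * f s) has_sum Y) UNIV"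
  shows "norm X \<le> Y * norm Q"
proof -
  have "(\<lambda>s. w s * f s) summable_on UNIV"
    using assms(3) by (auto simp: summable_on_def)
  with summable_on_norm_weighted_T[of UNIV w "\<lambda>s. s" Q] assms(1)
  obtain N where N: "((\<lambda>s. norm (w s *\<^sub>R T s Q)) has_sum N) UNIV"
    unfolding summable_on_def by blast
  have "norm X \<le> N"
    by (rule norm_has_sum_bound[OF N assms(2)])
  also have "N \<le> Y * norm Q"
  proof (rule has_sum_mono[OF N has_sum_cmult_left[OF assms(3)]])
    show "norm (w s *\<^sub>R T s Q) \<le> w s * f s * norm Q" for s
      using mult_left_mono[OF norm_T_le assms(1)] assms(1) by (simp add: mult.assoc)
  qed
  finally show ?thesis .
qed

text \<open>Absolute convergence lets the double series be summed in either order, so the same lemma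
  serves both composition laws.\<close>

lemma has_sum_weighted_pairs:
  assumes "weighted_summable f a" "weighted_summable f b"
    and "has_weighted_sum T a Fa" "has_weighted_sum T b Fb"
  shows "((\<lambda>(s, t). (a s * b t) *\<^sub>R T s (T t Q)) has_sum Fa (Fb Q)) UNIV"
proof -
  have a0: "0 \<le> a s" and b0: "0 \<le> b s" for s
    using assms by (auto simp: weighted_summable_def)
  have inner: "((\<lambda>t. (a s * b t) *\<^sub>R T s (T t Q)) has_sum a s *\<^sub>R T s (Fb Q)) UNIV" for s
  proof -
    have "bounded_linear (\<lambda>X. a s *\<^sub>R T s X)"
      by (rule bounded_linear_compose[OF bounded_linear_scaleR_right bounded_linear_T])
    from has_sum_bounded_linear[OF this, of "\<lambda>t. b t *\<^sub>R T t Q"] assms(4) show ?thesis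
      by (simp add: has_weighted_sum_def T_scaleR)
  qed
  have "(\<lambda>(s, t). (a s * f s) * (b t * f t)) summable_on UNIV"
    using assms by (intro summable_on_product_nonneg) (auto simp: weighted_summable_def a0 b0 nonneg)
  from summable_on_cmult_left[OF this, of "norm Q"]
  have "(\<lambda>(s, t). (a s * f s) * (b t * f t) * norm Q) summable_on UNIV"
    by (simp add: case_prod_unfold)
  then have "(\<lambda>(s, t). (a s * b t) *\<^sub>R T s (T t Q)) summable_on UNIV"
  proof (rule abs_summable_summable[OF summable_on_comparison_test])
    fix x :: "'c list \<times> 'c list"
    obtain s t where x: "x = (s, t)" by (cases x)
    have "norm (T s (T t Q)) \<le> f s * (f t * norm Q)"
      using norm_T_le[of s "T t Q"] mult_left_mono[OF norm_T_le nonneg] by (rule order_trans)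
    then have "a s * b t * norm (T s (T t Q)) \<le> a s * b t * (f s * (f t * norm Q))"
      by (rule mult_left_mono) (simp add: a0 b0)
    then show "norm ((case x of (s, t) \<Rightarrow> (a s * b t) *\<^sub>R T s (T t Q)))
        \<le> (case x of (s, t) \<Rightarrow> (a s * f s) * (b t * f t) * norm Q)"
      by (simp add: x a0 b0 mult_ac)
  qed simp
  then show ?thesis
    using has_sum_SigmaI[where f="\<lambda>(s, t). (a s * b t) *\<^sub>R T s (T t Q)" and A=UNIV
        and B="\<lambda>_. UNIV" and g="\<lambda>s. a s *\<^sub>R T s (Fb Q)" and S="Fa (Fb Q)"]
      inner assms(3) by (simp add: has_weighted_sum_def)
qed

lemma has_weighted_sum_conv:
  assumes "\<And>s t. T (s @ t) = T s \<circ> T t"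
    and "weighted_summable f a" "weighted_summable f b"
    and "has_weighted_sum T a Fa" "has_weighted_sum T b Fb"
  shows "has_weighted_sum T (word_conv a b) (Fa \<circ> Fb)"
  unfolding has_weighted_sum_def
proof
  fix Q
  have "T (take i u) (T (drop i u) Q) = T u Q" for i u
    using assms(1)[of "take i u" "drop i u"] by simp
  then show "((\<lambda>u. word_conv a b u *\<^sub>R T u Q) has_sum (Fa \<circ> Fb) Q) UNIV"
    using has_sum_splits[OF has_sum_weighted_pairs[OF assms(2-5), of Q]]
    by (simp add: word_conv_def scaleR_sum_left)
qed

lemma has_weighted_sum_conv_rev:
  assumes "\<And>s t. T (s @ t) = T t \<circ> T s"
    and "weighted_summable f a" "weighted_summable f b"
    and "has_weighted_sum T a Fa" "has_weighted_sum T b Fb"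
  shows "has_weighted_sum T (word_conv a b) (Fb \<circ> Fa)"
  unfolding has_weighted_sum_def
proof
  fix Q
  have "((\<lambda>(t, s). (b t * a s) *\<^sub>R T t (T s Q)) has_sum Fb (Fa Q)) (UNIV \<times> UNIV)"
    using has_sum_weighted_pairs[OF assms(3,2,5,4)] by simp
  from has_sum_swap[THEN iffD1, OF this]
  have "((\<lambda>(s, t). (a s * b t) *\<^sub>R T t (T s Q)) has_sum Fb (Fa Q)) UNIV"
    by (simp add: case_prod_unfold mult.commute)
  moreover have "T (drop i u) (T (take i u) Q) = T u Q" for i u
    using assms(1)[of "take i u" "drop i u"] by simp
  ultimately show "((\<lambda>u. word_conv a b u *\<^sub>R T u Q) has_sum (Fb \<circ> Fa) Q) UNIV"
    using has_sum_splits[where g="\<lambda>s t. (a s * b t) *\<^sub>R T t (T s Q)"]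
    by (simp add: word_conv_def scaleR_sum_left)
qed

lemma has_weighted_sum_conv_pow:
  assumes "weighted_summable f c" "has_weighted_sum T c F"
  shows "has_weighted_sum T (word_conv_pow c n) (F ^^ n)"
proof (induction n)
  case 0
  have "T [] = (\<lambda>Q. Q)"
    by (rule ext) (rule T_Nil)
  then show ?case
    using has_weighted_sum_single[of "[]"] by (simp add: if_distrib[symmetric] cong: if_cong)
next
  case (Suc n)
  note conv_assms = assms(1) weighted_summable_conv_pow[OF assms(1)] assms(2) Suc
  from T_append show ?case
  proof
    assume "\<forall>s t. T (s @ t) = T s \<circ> T t"
    then show ?case
      unfolding word_conv_pow_Suc_eq funpow.simps(2) by (intro has_weighted_sum_conv conv_assms) simp
  next
    assume "\<forall>s t. T (s @ t) = T t \<circ> T s"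
    then show ?case
      unfolding word_conv_pow_Suc_eq funpow_Suc_right by (intro has_weighted_sum_conv_rev conv_assms) simp
  qed
qed

lemma has_sum_conv_pow_weights:
  assumes "weighted_summable f c" "has_weighted_sum T c F"
  shows "((\<lambda>s. word_conv_pow c n s * f s) has_sum \<phi> ((F ^^ n) Q\<^sub>0)) UNIV"
proof -
  have "((\<lambda>s. word_conv_pow c n s *\<^sub>R T s Q\<^sub>0) has_sum (F ^^ n) Q\<^sub>0) UNIV"
    using has_weighted_sum_conv_pow[OF assms, of n] by (simp add: has_weighted_sum_def)
  from has_sum_bounded_linear[OF bounded_linear_\<phi> this] show ?thesis
    by (simp add: \<phi>_T linear.scaleR[OF bounded_linear.linear[OF bounded_linear_\<phi>]])
qed

text \<open>Since \<open>\<phi> (T s Q\<^sub>0) = f s\<close>, the scalar double series is the image of \<open>\<Sum>\<^sub>n F\<^sup>n Q\<^sub>0\<close>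
  under \<open>\<phi>\<close>; conversely, its \<open>n\<close>-th row bounds \<open>\<parallel>F\<^sup>n Q\<parallel> / \<parallel>Q\<parallel>\<close>.\<close>

lemma star_summable_if_summable_powers:
  assumes "weighted_summable f c" "has_weighted_sum T c F" "\<forall>Q. summable (\<lambda>n. (F ^^ n) Q)"
  shows "star_summable f c"
proof -
  have c0: "0 \<le> c s" for s
    using assms(1) by (simp add: weighted_summable_def)
  note k = has_sum_conv_pow_weights[OF assms(1,2)]
  have "summable (\<lambda>n. \<phi> ((F ^^ n) Q\<^sub>0))"
    using bounded_linear.summable[OF bounded_linear_\<phi>] assms(3) by blast
  moreover have "0 \<le> \<phi> ((F ^^ n) Q\<^sub>0)" for n
    using k by (rule has_sum_nonneg) (simp add: word_conv_pow_nonneg c0 nonneg)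
  ultimately have rows: "(\<lambda>n. \<phi> ((F ^^ n) Q\<^sub>0)) summable_on UNIV"
    by (rule summable_nonneg_imp_summable_on)
  have "(\<lambda>(n, s). word_conv_pow c n s * f s) summable_on UNIV \<times> UNIV"
    by (rule summable_on_SigmaI[OF _ rows])
      (use k in \<open>simp_all add: word_conv_pow_nonneg c0 nonneg\<close>)
  then show ?thesis
    by (simp add: star_summable_def)
qed

lemma summable_powers_if_star_summable:
  assumes "weighted_summable f c" "has_weighted_sum T c F" "star_summable f c"
  shows "summable (\<lambda>n. (F ^^ n) Q)"
proof -
  have c0: "0 \<le> c s" for s
    using assms(1) by (simp add: weighted_summable_def)
  note k = has_sum_conv_pow_weights[OF assms(1,2)]
  obtain Y where "((\<lambda>(n, s). word_conv_pow c n s * f s) has_sum Y) (UNIV \<times> UNIV)"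
    using assms(3) by (auto simp: star_summable_def summable_on_def)
  then have "((\<lambda>n. \<phi> ((F ^^ n) Q\<^sub>0)) has_sum Y) UNIV"
    by (rule has_sum_SigmaD) (use k in simp)
  then have "summable (\<lambda>n. \<phi> ((F ^^ n) Q\<^sub>0))"
    by (auto simp: summable_def dest: has_sum_imp_sums)
  then have "summable (\<lambda>n. \<phi> ((F ^^ n) Q\<^sub>0) * norm Q)"
    by (rule summable_mult2)
  moreover have "norm ((F ^^ n) Q) \<le> \<phi> ((F ^^ n) Q\<^sub>0) * norm Q" for n
    using has_weighted_sum_conv_pow[OF assms(1,2), of n]
    by (intro norm_weighted_sum_le[OF _ _ k]) (auto simp: has_weighted_sum_def word_conv_pow_nonneg c0)
  ultimately show ?thesis
    by (rule summable_comparison_test'[where N=0])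
qed

lemma summable_powers_iff_star_summable:
  assumes "weighted_summable f c" "has_weighted_sum T c F"
  shows "(\<forall>Q. summable (\<lambda>n. (F ^^ n) Q)) \<longleftrightarrow> star_summable f c"
  using star_summable_if_summable_powers summable_powers_if_star_summable assms by blast

lemma has_weighted_sum_conv_star:
  assumes "weighted_summable f c" "has_weighted_sum T c F" "star_summable f c" "c [] = 0"
  shows "has_weighted_sum T (word_conv_star c) (\<lambda>Q. \<Sum>n. (F ^^ n) Q)"
  unfolding has_weighted_sum_def
proof
  fix Q
  have c0: "0 \<le> c s" for s
    using assms(1) by (simp add: weighted_summable_def)
  have "(\<lambda>x. norm ((\<lambda>(n, s). word_conv_pow c n s) x *\<^sub>R T (snd x) Q)) summable_on UNIV"
    by (rule summable_on_norm_weighted_T)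
      (use assms(3) in \<open>auto simp: star_summable_def case_prod_unfold word_conv_pow_nonneg c0\<close>)
  from abs_summable_summable[OF this]
  obtain X where "((\<lambda>(n, s). word_conv_pow c n s *\<^sub>R T s Q) has_sum X) UNIV"
    by (auto simp: summable_on_def case_prod_unfold)
  then have X: "((\<lambda>(n, s). word_conv_pow c n s *\<^sub>R T s Q) has_sum X) (UNIV \<times> UNIV)"
    by simp
  have "((\<lambda>n. (F ^^ n) Q) has_sum X) UNIV"
    by (rule has_sum_SigmaD[OF X])
      (use has_weighted_sum_conv_pow[OF assms(1,2)] in \<open>simp add: has_weighted_sum_def\<close>)
  then have "X = (\<Sum>n. (F ^^ n) Q)"
    by (simp add: has_sum_imp_sums sums_unique)
  moreover have "((\<lambda>s. \<Sum>n\<le>length s. word_conv_pow c n s *\<^sub>R T s Q) has_sum X) UNIV"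
    using X by (intro has_sum_by_length) (simp_all add: word_conv_pow_eq_0 assms(4))
  ultimately show "((\<lambda>s. word_conv_star c s *\<^sub>R T s Q) has_sum (\<Sum>n. (F ^^ n) Q)) UNIV"
    by (simp add: word_conv_star_def scaleR_sum_left)
qed

lemma weighted_sums_conv_star:
  assumes "weighted_summable f c" "has_weighted_sum T c F"
    and "c [] \<in> \<nat>" "\<forall>Q. summable (\<lambda>n. (F ^^ n) Q)"
  shows "c [] = 0"
    and "weighted_summable f (word_conv_star c)"
    and "has_weighted_sum T (word_conv_star c) (\<lambda>Q. \<Sum>n. (F ^^ n) Q)"
proof -
  have star: "star_summable f c"
    using summable_powers_iff_star_summable[OF assms(1,2)] assms(4) by blast
  from \<open>c [] \<in> \<nat>\<close> star_summable_Nil_lt_1[OF star] show "c [] = 0"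
    by (auto elim: Nats_cases)
  then show "weighted_summable f (word_conv_star c)"
    and "has_weighted_sum T (word_conv_star c) (\<lambda>Q. \<Sum>n. (F ^^ n) Q)"
    using weighted_summable_conv_star has_weighted_sum_conv_star assms(1,2) star by blast+
qed

end

section \<open>Transfer operators of a u-MPS\<close>

lemma word_mat_Nil: "word_mat A [] = mat 1"
  by (simp add: word_mat_def)

lemma word_mat_singleton: "word_mat A [c] = A c"
  by (simp add: word_mat_def)

lemma word_mat_append: "word_mat A (s @ t) = word_mat A s ** word_mat A t"
  by (induction s) (simp_all add: word_mat_def matrix_mul_assoc)

lemma norm_matrix_power2: "(norm (M :: real^'n^'m))\<^sup>2 = (\<Sum>i\<in>UNIV. \<Sum>j\<in>UNIV. (M $ i $ j)\<^sup>2)"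
  by (simp only: power2_norm_eq_inner) (simp add: inner_vec_def power2_eq_square)

lemma norm_transpose: "norm (transpose (M :: real^'n^'m)) = norm M"
proof -
  have "(norm (transpose M))\<^sup>2 = (norm M)\<^sup>2"
    unfolding norm_matrix_power2 by (simp add: transpose_def) (rule sum.swap)
  then show ?thesis by simp
qed

lemma norm_matrix_mult_le: "norm ((A :: real^'k^'m) ** (B :: real^'n^'k)) \<le> norm A * norm B"
proof -
  have "(norm (A ** B))\<^sup>2 = (\<Sum>i\<in>UNIV. \<Sum>j\<in>UNIV. (A $ i \<bullet> column j B)\<^sup>2)"
    by (simp add: norm_matrix_power2 matrix_matrix_mult_def column_def inner_vec_def)
  also have "\<dots> \<le> (\<Sum>i\<in>UNIV. \<Sum>j\<in>UNIV. (A $ i \<bullet> A $ i) * (column j B \<bullet> column j B))"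
    by (intro sum_mono Cauchy_Schwarz_ineq)
  also have "\<dots> = (\<Sum>i\<in>UNIV. A $ i \<bullet> A $ i) * (\<Sum>j\<in>UNIV. column j B \<bullet> column j B)"
    by (simp add: sum_product)
  also have "(\<Sum>i\<in>UNIV. A $ i \<bullet> A $ i) = (norm A)\<^sup>2"
    by (simp add: power2_norm_eq_inner inner_vec_def)
  also have "(\<Sum>j\<in>UNIV. column j B \<bullet> column j B) = (norm B)\<^sup>2"
    unfolding norm_matrix_power2 by (simp add: column_def inner_vec_def power2_eq_square) (rule sum.swap)
  finally have "(norm (A ** B))\<^sup>2 \<le> (norm A * norm B)\<^sup>2"
    by (simp add: power_mult_distrib)
  then show ?thesis
    by (rule power2_le_imp_le) simp
qed

lemma norm_sandwich_le:
  "norm ((M :: real^'k^'m) ** (Q :: real^'l^'k) ** (N :: real^'n^'l)) \<le> norm M * norm Q * norm N"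
  using norm_matrix_mult_le[of "M ** Q" N]
    mult_right_mono[OF norm_matrix_mult_le[of M Q] norm_ge_zero[of N]]
  by (rule order_trans)

lemma trace_mult_transpose: "trace ((M :: real^'n^'m) ** transpose M) = (norm M)\<^sup>2"
  unfolding norm_matrix_power2
  by (simp add: trace_def matrix_matrix_mult_def transpose_def power2_eq_square)

lemma bounded_linear_trace: "bounded_linear (trace :: real^'n^'n \<Rightarrow> real)"
  unfolding linear_conv_bounded_linear[symmetric]
  by (rule linearI) (simp_all add: trace_def sum.distrib sum_distrib_left)

lemma matrix_add_rdistrib: "((A :: real^'k^'m) + B) ** (C :: real^'n^'k) = A ** C + B ** C"
  by (vector matrix_matrix_mult_def sum.distrib[symmetric] field_simps)

lemma bounded_linear_sandwich: "bounded_linear (\<lambda>Q :: real^'n^'n. (M :: real^'n^'n) ** Q ** N)"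
  unfolding linear_conv_bounded_linear[symmetric]
  by (rule linearI)
    (simp_all add: matrix_add_ldistrib matrix_add_rdistrib scalar_matrix_assoc matrix_scalar_ac)

definition word_norm_sq :: "('c \<Rightarrow> real^'n^'n) \<Rightarrow> 'c list \<Rightarrow> real" where
  "word_norm_sq A s = (norm (word_mat A s))\<^sup>2"

definition transfer_r :: "('c \<Rightarrow> real^'n^'n) \<Rightarrow> 'c list \<Rightarrow> real^'n^'n \<Rightarrow> real^'n^'n" where
  "transfer_r A s Q = word_mat A s ** Q ** transpose (word_mat A s)"

definition transfer_l :: "('c \<Rightarrow> real^'n^'n) \<Rightarrow> 'c list \<Rightarrow> real^'n^'n \<Rightarrow> real^'n^'n" where
  "transfer_l A s Q = transpose (word_mat A s) ** Q ** word_mat A s"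

lemma transfer_r_append: "transfer_r A (s @ t) = transfer_r A s \<circ> transfer_r A t"
  by (auto simp: transfer_r_def word_mat_append matrix_transpose_mul matrix_mul_assoc)

lemma transfer_l_append: "transfer_l A (s @ t) = transfer_l A t \<circ> transfer_l A s"
  by (auto simp: transfer_l_def word_mat_append matrix_transpose_mul matrix_mul_assoc)

lemma submultiplicative_word_norm_sq: "submultiplicative (word_norm_sq A)"
proof
  fix s t
  show "0 \<le> word_norm_sq A s"
    by (simp add: word_norm_sq_def)
  show "word_norm_sq A (s @ t) \<le> word_norm_sq A s * word_norm_sq A t"
    unfolding word_norm_sq_def word_mat_append power_mult_distrib[symmetric]
    by (rule power_mono[OF norm_matrix_mult_le norm_ge_zero])
  have "(mat 1 :: real^'n^'n) $ i $ i \<noteq> 0" for i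
    by (simp add: mat_def)
  then have "(mat 1 :: real^'n^'n) \<noteq> 0"
    by (metis zero_index)
  then show "0 < word_norm_sq A []"
    by (simp add: word_norm_sq_def word_mat_Nil)
qed

lemma word_operators_transfer_r:
  fixes A :: "'c \<Rightarrow> real^'n^'n"
  shows "word_operators (word_norm_sq A) (transfer_r A) trace (mat 1)"
proof (rule word_operators.intro[OF submultiplicative_word_norm_sq], rule word_operators_axioms.intro)
  fix s :: "'c list" and Q
  show "bounded_linear (transfer_r A s)"
    unfolding transfer_r_def[abs_def] by (rule bounded_linear_sandwich)
  show "transfer_r A [] Q = Q"
    by (simp add: transfer_r_def word_mat_Nil)
  show "(\<forall>s t. transfer_r A (s @ t) = transfer_r A s \<circ> transfer_r A t) \<or>
      (\<forall>s t. transfer_r A (s @ t) = transfer_r A t \<circ> transfer_r A s)"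
    by (simp add: transfer_r_append)
  show "norm (transfer_r A s Q) \<le> word_norm_sq A s * norm Q"
    using norm_sandwich_le[of "word_mat A s" Q "transpose (word_mat A s)"]
    by (simp add: transfer_r_def word_norm_sq_def norm_transpose power2_eq_square mult_ac)
  show "trace (transfer_r A s (mat 1)) = word_norm_sq A s"
    by (simp add: transfer_r_def word_norm_sq_def trace_mult_transpose)
qed (fact bounded_linear_trace)

lemma word_operators_transfer_l:
  fixes A :: "'c \<Rightarrow> real^'n^'n"
  shows "word_operators (word_norm_sq A) (transfer_l A) trace (mat 1)"
proof (rule word_operators.intro[OF submultiplicative_word_norm_sq], rule word_operators_axioms.intro)
  fix s :: "'c list" and Q
  show "bounded_linear (transfer_l A s)"
    unfolding transfer_l_def[abs_def] by (rule bounded_linear_sandwich)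
  show "transfer_l A [] Q = Q"
    by (simp add: transfer_l_def word_mat_Nil)
  show "(\<forall>s t. transfer_l A (s @ t) = transfer_l A s \<circ> transfer_l A t) \<or>
      (\<forall>s t. transfer_l A (s @ t) = transfer_l A t \<circ> transfer_l A s)"
    by (simp add: transfer_l_append)
  show "norm (transfer_l A s Q) \<le> word_norm_sq A s * norm Q"
    using norm_sandwich_le[of "transpose (word_mat A s)" Q "word_mat A s"]
    by (simp add: transfer_l_def word_norm_sq_def norm_transpose power2_eq_square mult_ac)
  show "trace (transfer_l A s (mat 1)) = word_norm_sq A s"
    by (simp add: transfer_l_def word_norm_sq_def trace_mul_sym[of "transpose (word_mat A s)"]
        trace_mult_transpose)
qed (fact bounded_linear_trace)

section \<open>Match counts as weights\<close>

definition match_weight :: "'c regex \<Rightarrow> 'c list \<Rightarrow> real" where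
  "match_weight R s = real (the_enat (match_count R s))"

definition split_count :: "('c list \<Rightarrow> 'a::comm_semiring_1) \<Rightarrow> nat \<Rightarrow> 'c list \<Rightarrow> 'a" where
  "split_count m n s = (\<Sum>ps\<in>{ps. length ps = n \<and> concat ps = s}. prod_list (map m ps))"

lemma finite_splits: "finite {ps :: 'c list list. length ps = n \<and> concat ps = s}"
proof (rule finite_subset)
  let ?B = "{t. set t \<subseteq> set s \<and> length t \<le> length s}"
  show "{ps :: 'c list list. length ps = n \<and> concat ps = s} \<subseteq> {ps. set ps \<subseteq> ?B \<and> length ps = n}"
  proof
    fix ps :: "'c list list"
    assume ps: "ps \<in> {ps. length ps = n \<and> concat ps = s}"
    have "t \<in> ?B" if "t \<in> set ps" for t
    proof -
      have "length t \<le> sum_list (map length ps)"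
        using that by (simp add: member_le_sum_list)
      then show ?thesis
        using that ps by (auto simp: length_concat)
    qed
    then show "ps \<in> {ps. set ps \<subseteq> ?B \<and> length ps = n}"
      using ps by blast
  qed
  show "finite {ps. set ps \<subseteq> ?B \<and> length ps = n}"
    by (rule finite_lists_length_eq) (use finite_lists_length_le[of "set s" "length s"] in auto)
qed

lemma split_count_0: "split_count m 0 s = (if s = [] then 1 else 0)"
proof -
  have "{ps. length ps = 0 \<and> concat ps = s} = (if s = [] then {[]} else {})"
    by auto
  then show ?thesis
    by (simp add: split_count_def)
qed

lemma split_count_Suc:
  "split_count m (Suc n) s = (\<Sum>i\<in>{0..length s}. m (take i s) * split_count m n (drop i s))"
proof -
  let ?S = "SIGMA i:{0..length s}. {ps. length ps = n \<and> concat ps = drop i s}"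
  have "split_count m (Suc n) s = (\<Sum>(i, ps)\<in>?S. m (take i s) * prod_list (map m ps))"
    unfolding split_count_def
  proof (rule sum.reindex_bij_witness[where i="\<lambda>(i, ps). take i s # ps"
        and j="\<lambda>ps. (length (hd ps), tl ps)"])
    fix ps assume "ps \<in> {ps. length ps = Suc n \<and> concat ps = s}"
    then obtain p ps' where "ps = p # ps'" "length ps' = n" "s = p @ concat ps'"
      by (cases ps) auto
    then show "(case (length (hd ps), tl ps) of (i, ps) \<Rightarrow> take i s # ps) = ps"
      and "(length (hd ps), tl ps) \<in> ?S"
      and "(case (length (hd ps), tl ps) of (i, ps) \<Rightarrow> m (take i s) * prod_list (map m ps))
          = prod_list (map m ps)"
      by auto
  qed auto
  also have "\<dots> = (\<Sum>i\<in>{0..length s}. m (take i s) * split_count m n (drop i s))"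
    by (simp add: sum.Sigma[symmetric] finite_splits split_count_def sum_distrib_left)
  finally show ?thesis .
qed

lemma match_count_Star_split_count: "match_count (Star S) s = (\<Sum>n. split_count (match_count S) n s)"
  by (simp add: split_count_def suminf_eq_SUP)

lemma real_the_enat_add:
  "x \<noteq> \<infinity> \<Longrightarrow> y \<noteq> \<infinity> \<Longrightarrow> real (the_enat (x + y)) = real (the_enat x) + real (the_enat y)"
  by (cases x; cases y) auto

lemma real_the_enat_mult:
  "x \<noteq> \<infinity> \<Longrightarrow> y \<noteq> \<infinity> \<Longrightarrow> real (the_enat (x * y)) = real (the_enat x) * real (the_enat y)"
  by (cases x; cases y) auto

lemma sum_enat_neq_infinity: "(\<And>i. i \<in> I \<Longrightarrow> x i \<noteq> \<infinity>) \<Longrightarrow> sum x I \<noteq> (\<infinity>::enat)"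
  by (induction I rule: infinite_finite_induct) (auto simp: plus_eq_infty_iff_enat)

lemma real_the_enat_sum:
  "(\<And>i. i \<in> I \<Longrightarrow> x i \<noteq> \<infinity>) \<Longrightarrow> real (the_enat (sum x I)) = (\<Sum>i\<in>I. real (the_enat (x i)))"
  by (induction I rule: infinite_finite_induct)
    (auto simp: zero_enat_def real_the_enat_add sum_enat_neq_infinity)

lemma split_count_neq_infinity:
  "(\<And>t. m t \<noteq> \<infinity>) \<Longrightarrow> split_count m n s \<noteq> (\<infinity>::enat)"
  by (induction n arbitrary: s)
    (simp_all del: not_infinity_eq add: split_count_0 split_count_Suc imult_is_infinity
      sum_enat_neq_infinity)

lemma real_the_enat_split_count:
  assumes "\<And>t. m t \<noteq> \<infinity>"
  shows "real (the_enat (split_count m n s)) = word_conv_pow (\<lambda>t. real (the_enat (m t))) n s"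
proof (induction n arbitrary: s)
  case 0
  then show ?case by (simp add: split_count_0 zero_enat_def one_enat_def)
next
  case (Suc n)
  then show ?case
    by (simp add: split_count_Suc word_conv_def real_the_enat_sum real_the_enat_mult assms
        split_count_neq_infinity imult_is_infinity)
qed

text \<open>A named predicate, because \<open>simp\<close> rewrites \<open>x \<noteq> \<infinity>\<close> into \<open>\<exists>i. x = enat i\<close>
  (\<open>not_infinity_eq\<close>), which defeats the lemmas stated with \<open>\<noteq> \<infinity>\<close>.\<close>

definition finite_matches :: "'c regex \<Rightarrow> bool" where
  "finite_matches R \<longleftrightarrow> (\<forall>s. match_count R s \<noteq> \<infinity>)"

lemma match_weight_Atom: "match_weight (Atom c) = (\<lambda>s. if s = [c] then 1 else 0)"
  by (auto simp: match_weight_def one_enat_def zero_enat_def)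

lemma finite_matches_Atom: "finite_matches (Atom c)"
  by (simp add: finite_matches_def one_enat_def zero_enat_def)

lemma match_weight_Conc:
  assumes "finite_matches R1" "finite_matches R2"
  shows "finite_matches (Conc R1 R2)"
    and "match_weight (Conc R1 R2) = word_conv (match_weight R1) (match_weight R2)"
proof -
  have fin: "match_count R1 (take i s) * match_count R2 (drop i s) \<noteq> \<infinity>" for i s
    using assms imult_is_infinity unfolding finite_matches_def by metis
  then show "finite_matches (Conc R1 R2)"
    by (simp del: not_infinity_eq add: finite_matches_def sum_enat_neq_infinity)
  show "match_weight (Conc R1 R2) = word_conv (match_weight R1) (match_weight R2)"
    using assms fin unfolding finite_matches_def
    by (simp del: not_infinity_eq add: fun_eq_iff match_weight_def word_conv_def
        real_the_enat_sum real_the_enat_mult)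
qed

lemma match_weight_Alt:
  assumes "finite_matches R1" "finite_matches R2"
  shows "finite_matches (Alt R1 R2)"
    and "match_weight (Alt R1 R2) = (\<lambda>s. match_weight R1 s + match_weight R2 s)"
  using assms
  by (auto simp: finite_matches_def match_weight_def plus_eq_infty_iff_enat real_the_enat_add)

lemma match_weight_Star:
  assumes fin: "finite_matches S" and Nil: "match_weight S [] = 0"
  shows "finite_matches (Star S)"
    and "match_weight (Star S) = word_conv_star (match_weight S)"
proof -
  have count_fin: "split_count (match_count S) n s \<noteq> \<infinity>" for n s
    using fin by (simp del: not_infinity_eq add: finite_matches_def split_count_neq_infinity)
  have weight: "real (the_enat (split_count (match_count S) n s)) = word_conv_pow (match_weight S) n s"
    for n s
    using fin real_the_enat_split_count[of "match_count S"]
    by (simp del: not_infinity_eq add: finite_matches_def match_weight_def[abs_def])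
  have "split_count (match_count S) n s = 0" if "length s < n" for n s
    using count_fin[of n s] weight[of n s] word_conv_pow_eq_0[of "match_weight S", OF Nil that]
    by (cases "split_count (match_count S) n s") (auto simp: zero_enat_def)
  then have Star: "match_count (Star S) s = (\<Sum>n\<le>length s. split_count (match_count S) n s)" for s
    unfolding match_count_Star_split_count by (intro suminf_finite) auto
  show "finite_matches (Star S)"
    unfolding finite_matches_def Star
    by (simp del: not_infinity_eq add: count_fin sum_enat_neq_infinity)
  show "match_weight (Star S) = word_conv_star (match_weight S)"
    unfolding fun_eq_iff match_weight_def[of "Star S"] Star
    by (simp del: not_infinity_eq add: word_conv_star_def real_the_enat_sum count_fin weight)
qed

section \<open>Convergence of the transfer operators\<close>

lemma E_r_has_weighted_sum:
  fixes A :: "'c \<Rightarrow> real^'n^'n"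
  assumes "conv_r A R"
  shows "finite_matches R \<and> weighted_summable (word_norm_sq A) (match_weight R)
    \<and> has_weighted_sum (transfer_r A) (match_weight R) (E_r A R)"
proof -
  interpret word_operators "word_norm_sq A" "transfer_r A" trace "mat 1"
    by (rule word_operators_transfer_r)
  show ?thesis
    using assms
  proof (induction R)
    case (Atom c)
    have "E_r A (Atom c) = transfer_r A [c]"
      by (simp add: fun_eq_iff transfer_r_def word_mat_singleton)
    then show ?case
      using finite_matches_Atom weighted_summable_single has_weighted_sum_single
      by (simp add: match_weight_Atom)
  next
    case (Conc R1 R2)
    then have fin: "finite_matches R1" "finite_matches R2"
      and sums: "weighted_summable (word_norm_sq A) (match_weight R1)"
        "weighted_summable (word_norm_sq A) (match_weight R2)"
        "has_weighted_sum (transfer_r A) (match_weight R1) (E_r A R1)"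
        "has_weighted_sum (transfer_r A) (match_weight R2) (E_r A R2)"
      by auto
    show ?case
      unfolding E_r.simps match_weight_Conc(2)[OF fin]
      using match_weight_Conc(1)[OF fin] weighted_summable_conv[OF sums(1,2)]
        has_weighted_sum_conv[OF transfer_r_append sums] by blast
  next
    case (Alt R1 R2)
    then have fin: "finite_matches R1" "finite_matches R2"
      and sums: "weighted_summable (word_norm_sq A) (match_weight R1)"
        "weighted_summable (word_norm_sq A) (match_weight R2)"
        "has_weighted_sum (transfer_r A) (match_weight R1) (E_r A R1)"
        "has_weighted_sum (transfer_r A) (match_weight R2) (E_r A R2)"
      by auto
    show ?case
      unfolding E_r.simps match_weight_Alt(2)[OF fin]
      using match_weight_Alt(1)[OF fin] weighted_summable_add[OF sums(1,2)]
        has_weighted_sum_add[OF sums(3,4)] by blast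
  next
    case (Star S)
    then have fin: "finite_matches S"
      and sums: "weighted_summable (word_norm_sq A) (match_weight S)"
        "has_weighted_sum (transfer_r A) (match_weight S) (E_r A S)"
      by auto
    have "match_weight S [] \<in> \<nat>"
      by (simp add: match_weight_def)
    note star = weighted_sums_conv_star[OF sums this]
    show ?case
      using star match_weight_Star[OF fin star(1)] Star.prems by simp
  qed
qed

lemma E_l_has_weighted_sum:
  fixes A :: "'c \<Rightarrow> real^'n^'n"
  assumes "conv_l A R"
  shows "finite_matches R \<and> weighted_summable (word_norm_sq A) (match_weight R)
    \<and> has_weighted_sum (transfer_l A) (match_weight R) (E_l A R)"
proof -
  interpret word_operators "word_norm_sq A" "transfer_l A" trace "mat 1"
    by (rule word_operators_transfer_l)
  show ?thesis
    using assms
  proof (induction R)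
    case (Atom c)
    have "E_l A (Atom c) = transfer_l A [c]"
      by (simp add: fun_eq_iff transfer_l_def word_mat_singleton)
    then show ?case
      using finite_matches_Atom weighted_summable_single has_weighted_sum_single
      by (simp add: match_weight_Atom)
  next
    case (Conc R1 R2)
    then have fin: "finite_matches R1" "finite_matches R2"
      and sums: "weighted_summable (word_norm_sq A) (match_weight R1)"
        "weighted_summable (word_norm_sq A) (match_weight R2)"
        "has_weighted_sum (transfer_l A) (match_weight R1) (E_l A R1)"
        "has_weighted_sum (transfer_l A) (match_weight R2) (E_l A R2)"
      by auto
    show ?case
      unfolding E_l.simps match_weight_Conc(2)[OF fin]
      using match_weight_Conc(1)[OF fin] weighted_summable_conv[OF sums(1,2)]
        has_weighted_sum_conv_rev[OF transfer_l_append sums] by blast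
  next
    case (Alt R1 R2)
    then have fin: "finite_matches R1" "finite_matches R2"
      and sums: "weighted_summable (word_norm_sq A) (match_weight R1)"
        "weighted_summable (word_norm_sq A) (match_weight R2)"
        "has_weighted_sum (transfer_l A) (match_weight R1) (E_l A R1)"
        "has_weighted_sum (transfer_l A) (match_weight R2) (E_l A R2)"
      by auto
    show ?case
      unfolding E_l.simps match_weight_Alt(2)[OF fin]
      using match_weight_Alt(1)[OF fin] weighted_summable_add[OF sums(1,2)]
        has_weighted_sum_add[OF sums(3,4)] by blast
  next
    case (Star S)
    then have fin: "finite_matches S"
      and sums: "weighted_summable (word_norm_sq A) (match_weight S)"
        "has_weighted_sum (transfer_l A) (match_weight S) (E_l A S)"
      by auto
    have "match_weight S [] \<in> \<nat>"
      by (simp add: match_weight_def)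
    note star = weighted_sums_conv_star[OF sums this]
    show ?case
      using star match_weight_Star[OF fin star(1)] Star.prems by simp
  qed
qed

lemma has_sum_E_r:
  assumes "conv_r A R"
  shows "((\<lambda>s. real (the_enat (match_count R s)) *\<^sub>R
      (word_mat A s ** Q ** transpose (word_mat A s))) has_sum E_r A R Q) UNIV"
  using E_r_has_weighted_sum[OF assms] by (simp add: has_weighted_sum_def match_weight_def transfer_r_def)

lemma has_sum_E_l:
  assumes "conv_l A R"
  shows "((\<lambda>s. real (the_enat (match_count R s)) *\<^sub>R
      (transpose (word_mat A s) ** Q ** word_mat A s)) has_sum E_l A R Q) UNIV"
  using E_l_has_weighted_sum[OF assms] by (simp add: has_weighted_sum_def match_weight_def transfer_l_def)

lemma conv_r_iff_conv_l:
  fixes A :: "'c \<Rightarrow> real^'n^'n"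
  shows "conv_r A R \<longleftrightarrow> conv_l A R"
proof (induction R)
  case (Star S)
  show ?case
  proof (cases "conv_r A S")
    case True
    then have "conv_l A S"
      using Star.IH by simp
    have "(\<forall>Q. summable (\<lambda>n. (E_r A S ^^ n) Q)) \<longleftrightarrow> star_summable (word_norm_sq A) (match_weight S)"
      using E_r_has_weighted_sum[OF True]
        word_operators.summable_powers_iff_star_summable[OF word_operators_transfer_r] by blast
    moreover have "(\<forall>Q. summable (\<lambda>n. (E_l A S ^^ n) Q)) \<longleftrightarrow> star_summable (word_norm_sq A) (match_weight S)"
      using E_l_has_weighted_sum[OF \<open>conv_l A S\<close>]
        word_operators.summable_powers_iff_star_summable[OF word_operators_transfer_l] by blast
    ultimately show ?thesis
      using True \<open>conv_l A S\<close> by simp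
  next
    case False
    then show ?thesis
      using Star.IH by simp
  qed
qed simp_all

lemma has_sum_lang_if_unambiguous:
  fixes X :: "'c list \<Rightarrow> 'a::real_normed_vector"
  assumes "unambiguous R" "((\<lambda>s. real (the_enat (match_count R s)) *\<^sub>R X s) has_sum Y) UNIV"
  shows "(X has_sum Y) (lang R)"
proof -
  have "((\<lambda>s. real (the_enat (match_count R s)) *\<^sub>R X s) has_sum Y) UNIV \<longleftrightarrow> (X has_sum Y) (lang R)"
  proof (rule has_sum_cong_neutral)
    show "real (the_enat (match_count R s)) *\<^sub>R X s = 0" if "s \<in> UNIV - lang R" for s
      using that by (simp add: lang_def zero_enat_def)
    show "real (the_enat (match_count R s)) *\<^sub>R X s = X s" if "s \<in> UNIV \<inter> lang R" for s
      using that assms(1) by (auto simp: lang_def unambiguous_def one_enat_def)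
  qed simp
  with assms(2) show ?thesis
    by blast
qed

theorem theorem2:
  fixes A :: "'c::finite \<Rightarrow> real^'n^'n" and R :: "'c regex"
  shows "(conv_r A R \<longleftrightarrow> conv_l A R) \<and>
    (conv_r A R \<longrightarrow>
      (\<forall>s. match_count R s \<noteq> \<infinity>) \<and>
      (\<forall>Qr. ((\<lambda>s. real (the_enat (match_count R s)) *\<^sub>R
                 (word_mat A s ** Qr ** transpose (word_mat A s))) has_sum E_r A R Qr) UNIV) \<and>
      (\<forall>Ql. ((\<lambda>s. real (the_enat (match_count R s)) *\<^sub>R
                 (transpose (word_mat A s) ** Ql ** word_mat A s)) has_sum E_l A R Ql) UNIV) \<and>
      (unambiguous R \<longrightarrow>
        (\<forall>Qr. ((\<lambda>s. word_mat A s ** Qr ** transpose (word_mat A s)) has_sum E_r A R Qr) (lang R)) \<and>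
        (\<forall>Ql. ((\<lambda>s. transpose (word_mat A s) ** Ql ** word_mat A s) has_sum E_l A R Ql) (lang R))))"
proof -
  have "conv_r A R \<Longrightarrow> finite_matches R"
    using E_r_has_weighted_sum by blast
  then show ?thesis
    using conv_r_iff_conv_l[of A R] has_sum_E_r[of A R] has_sum_E_l[of A R]
    by (auto simp: finite_matches_def intro: has_sum_lang_if_unambiguous)
qed

end
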